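(* Let $\tilde X,\tilde Y$ be $\mathbb{N}$-valued random variables with $\mathbb{E}[\tilde X^2+\tilde Y^2]<+\infty$, let $b_1,b_2>0$, $m_0>0$, and assume $b_1(\mathbb{E}[\tilde X]-1)+b_2\mathbb{E}[\tilde Y]=0$. Write $\hat p_{\tilde X}(z)=\mathbb{E}[z^{\tilde X}]$, $\hat p_{\tilde Y}(z)=\mathbb{E}[z^{\tilde Y}]$. Then the unique $C^1$ function $\hat g_\infty$ on $[0,1]$ with $\hat g_\infty(1)=1$ solving $$m_0b_2(\hat p_{\tilde Y}(z)-1)\,\hat g_\infty(z)+b_1(\hat p_{\tilde X}(z)-z)\,\partial_z\hat g_\infty(z)=0,\qquad z\in[0,1],$$ is $$\hat g_\infty(z)=\exp\Big\{-m_0\frac{b_2}{b_1}\int_z^1\frac{1-\hat p_{\tilde Y}(s)}{\hat p_{\tilde X}(s)-s}\,ds\Big\}.$$ Moreover $\hat g_\infty$ is the probability generating function of an infinitely divisible distribution $g_\infty$ on $\mathbb{N}$. Finally, $g_\infty$ is the density of a random variable $V_\infty$ satisfying $$V_\infty^*\stackrel{d}{=}V_\infty+1+\zeta+\sum_{k=1}^{\gamma}\xi_k,$$ where $V^*_\infty$ is the size-biased version of $V_\infty$, $\zeta$ has generating function $Q^*$, each $\xi_k$ has generating function $P^*$, $\gamma$ has the geometric distribution of parameter $m=\mathbb{E}[\tilde X]$, and $V_\infty,\zeta,\gamma,\xi_1,\xi_2,\dots$ are independent.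
   Context: Let $\phi_X(z)=\sum_{k\ge0}z^kP\{\tilde X>k\}$, $\phi_Y(z)=\sum_{k\ge0}z^kP\{\tilde Y>k\}$, $m=\mathbb{E}[\tilde X]$, $P^*(z)=m^{-1}\phi_X(z)$ and $Q^*(z)=\frac{b_2}{b_1}(1-m)^{-1}\phi_Y(z)$ (these are probability generating functions under the hypotheses). The geometric distribution of parameter $m$ is the law on $\mathbb{N}$ with generating function $(1-m)/(1-ms)$. For a random variable $V$ on $\mathbb{N}$ with density $g$ and finite mean $M_1(g)$, its size-biased version $V^*$ has density $g^*(k)=kg(k)/M_1(g)$. The displayed differential equation is the stationary equation of the linear equation $\partial_t\hat g=b_1(\hat p_{\tilde X}(z)-z)\partial_z\hat g+b_2m_0e^{\bar\alpha_1t}(\hat p_{\tilde Y}(z)-1)\hat g$ with $\bar\alpha_1=b_1(\mathbb{E}[\tilde X]-1)+b_2\mathbb{E}[\tilde Y]=0$. *)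

theory Defs
  imports "HOL-Probability.Probability"
begin

definition pgf :: "nat pmf \<Rightarrow> real \<Rightarrow> real" where
  "pgf p z = measure_pmf.expectation p (\<lambda>k. z ^ k)"

definition tail_gf :: "nat pmf \<Rightarrow> real \<Rightarrow> real" where
  "tail_gf p z = (\<Sum>k. z ^ k * measure_pmf.prob p {k<..})"

definition conv_pmf :: "nat pmf \<Rightarrow> nat pmf \<Rightarrow> nat pmf" where
  "conv_pmf p q = map_pmf (\<lambda>(a, b). a + b) (pair_pmf p q)"

fun conv_pow :: "nat pmf \<Rightarrow> nat \<Rightarrow> nat pmf" where
  "conv_pow p 0 = return_pmf 0"
| "conv_pow p (Suc n) = conv_pmf p (conv_pow p n)"

definition inf_divisible :: "nat pmf \<Rightarrow> bool" where
  "inf_divisible g \<longleftrightarrow> (\<forall>n\<ge>1. \<exists>h. conv_pow h n = g)"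

definition size_biased :: "nat pmf \<Rightarrow> nat \<Rightarrow> real" where
  "size_biased g k = real k * pmf g k / measure_pmf.expectation g real"

definition C1_stationary_solution ::
  "nat pmf \<Rightarrow> nat pmf \<Rightarrow> real \<Rightarrow> real \<Rightarrow> real \<Rightarrow> (real \<Rightarrow> real) \<Rightarrow> bool" where
  "C1_stationary_solution pX pY b1 b2 m0 h \<longleftrightarrow>
     (\<exists>h'. continuous_on {0..1} h' \<and>
        (\<forall>z\<in>{0..1}. (h has_real_derivative h' z) (at z within {0..1})) \<and>
        h 1 = 1 \<and>
        (\<forall>z\<in>{0..1}. m0 * b2 * (pgf pY z - 1) * h z + b1 * (pgf pX z - z) * h' z = 0))"

end

theory Submission
  imports Defs
begin

text \<open>
  Since \<open>1 - pgf V z = (1 - z) \<phi>\<^sub>V(z)\<close>, the stationary equation is the linear equation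
  \<open>h' = m\<^sub>0 w h\<close> with the coefficient \<open>w = (b\<^sub>2/b\<^sub>1) \<phi>\<^sub>Y / (1 - \<phi>\<^sub>X)\<close>, which is continuous
  on \<open>[0,1]\<close> because \<open>\<phi>\<^sub>X \<le> m < 1\<close>; hence \<open>h(1) = 1\<close> determines \<open>h\<close>.
  The balance condition makes \<open>w = Q\<^sup>* (1 - m) / (1 - m P\<^sup>*)\<close> the pgf of
  \<open>W = \<zeta> + \<xi>\<^sub>1 + \<dots> + \<xi>\<^sub>\<gamma>\<close>. A compound Poisson law with jump law \<open>J\<close> has pgf
  \<open>exp (r (pgf J - 1))\<close>, so choosing \<open>J\<close> with \<open>r pgf J' = m\<^sub>0 pgf W\<close> produces an infinitely
  divisible solution \<open>g\<close>. Comparing coefficients in \<open>z g'(z) = m\<^sub>0 z pgf W(z) g(z)\<close> gives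
  \<open>k g(k) = m\<^sub>0 (g * \<delta>\<^sub>1 * W)(k)\<close>; summing over \<open>k\<close> gives \<open>E V\<^sub>\<infinity> = m\<^sub>0\<close> and hence
  \<open>V\<^sub>\<infinity>\<^sup>* = V\<^sub>\<infinity> + 1 + W\<close> in law.
\<close>

subsection \<open>Probability generating functions\<close>

lemma integrable_pmf_nat_iff:
  fixes p :: "nat pmf" and f :: "nat \<Rightarrow> real"
  shows "integrable (measure_pmf p) f \<longleftrightarrow> summable (\<lambda>k. \<bar>pmf p k * f k\<bar>)"
  unfolding measure_pmf_eq_density
  by (subst integrable_density) (auto simp: integrable_count_space_nat_iff)

lemma expectation_pmf_nat_sums:
  fixes p :: "nat pmf" and f :: "nat \<Rightarrow> real"
  assumes "integrable (measure_pmf p) f"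
  shows "(\<lambda>k. pmf p k * f k) sums measure_pmf.expectation p f"
proof -
  have "measure_pmf.expectation p f = (\<integral>k. pmf p k * f k \<partial>count_space UNIV)"
    unfolding measure_pmf_eq_density by (subst integral_density) auto
  moreover have "integrable (count_space UNIV) (\<lambda>k. pmf p k * f k)"
    using assms by (simp add: integrable_pmf_nat_iff integrable_count_space_nat_iff)
  ultimately show ?thesis using sums_integral_count_space_nat by metis
qed

lemma pmf_nat_sums_1: "(\<lambda>k. pmf (p :: nat pmf) k) sums 1"
  using expectation_pmf_nat_sums[of p "\<lambda>_. 1"] by simp

lemma integrable_power_bounded:
  fixes p :: "nat pmf" and z :: real assumes "\<bar>z\<bar> \<le> 1"
  shows "integrable (measure_pmf p) (\<lambda>k. z ^ k)"
  by (rule measure_pmf.integrable_const_bound[where B=1])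
     (use assms in \<open>auto simp: power_abs intro!: power_le_one\<close>)

lemma pgf_sums:
  fixes p :: "nat pmf" and z :: real assumes "\<bar>z\<bar> \<le> 1"
  shows "(\<lambda>k. pmf p k * z ^ k) sums pgf p z"
  unfolding pgf_def by (rule expectation_pmf_nat_sums[OF integrable_power_bounded[OF assms]])

lemma pgf_eq_suminf: "\<bar>z\<bar> \<le> 1 \<Longrightarrow> pgf p z = (\<Sum>k. pmf p k * z ^ k)"
  using pgf_sums sums_unique by metis

lemma ennreal_pgf:
  assumes "0 \<le> z" "z \<le> 1"
  shows "ennreal (pgf p z) = (\<integral>\<^sup>+k. ennreal (z ^ k) \<partial>p)"
  unfolding pgf_def using assms
  by (subst nn_integral_eq_integral) (auto intro!: integrable_power_bounded)

lemma pgf_nonneg: "0 \<le> z \<Longrightarrow> 0 \<le> pgf p z"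
  unfolding pgf_def by (rule integral_nonneg_AE) auto

lemma pgf_le_1:
  assumes "0 \<le> z" "z \<le> 1"
  shows "pgf p z \<le> 1"
proof -
  have "pgf p z \<le> measure_pmf.expectation p (\<lambda>_. 1::real)"
    unfolding pgf_def using assms
    by (intro integral_mono) (auto intro!: power_le_one integrable_power_bounded)
  thus ?thesis by simp
qed

lemma pgf_at_1 [simp]: "pgf p 1 = 1"
proof -
  have "pgf p 1 = measure_pmf.expectation p (\<lambda>_. 1::real)"
    unfolding pgf_def by (rule Bochner_Integration.integral_cong) auto
  thus ?thesis by simp
qed

lemma pgf_return_pmf [simp]: "pgf (return_pmf n) z = z ^ n"
  unfolding pgf_def by simp

lemma pgf_conv_pmf:
  assumes "0 \<le> z" "z \<le> 1"
  shows "pgf (conv_pmf p q) z = pgf p z * pgf q z"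
proof -
  have "ennreal (pgf (conv_pmf p q) z) = (\<integral>\<^sup>+a. \<integral>\<^sup>+b. ennreal (z ^ a) * ennreal (z ^ b) \<partial>q \<partial>p)"
    unfolding ennreal_pgf[OF assms] conv_pmf_def
    by (simp add: nn_integral_pair_pmf' power_add ennreal_mult' assms)
  also have "\<dots> = ennreal (pgf p z) * ennreal (pgf q z)"
    by (simp add: nn_integral_cmult nn_integral_multc ennreal_pgf[OF assms])
  also have "\<dots> = ennreal (pgf p z * pgf q z)"
    by (simp add: ennreal_mult' pgf_nonneg assms)
  finally show ?thesis using assms by (simp add: pgf_nonneg)
qed

lemma pgf_bind_pmf:
  assumes "0 \<le> z" "z \<le> 1"
  shows "pgf (bind_pmf N f) z = measure_pmf.expectation N (\<lambda>n. pgf (f n) z)"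
proof -
  have "ennreal (pgf (bind_pmf N f) z) = (\<integral>\<^sup>+n. ennreal (pgf (f n) z) \<partial>N)"
    by (simp add: ennreal_pgf[OF assms])
  also have "\<dots> = ennreal (measure_pmf.expectation N (\<lambda>n. pgf (f n) z))"
    using assms by (intro nn_integral_eq_integral measure_pmf.integrable_const_bound[where B=1])
                   (auto simp: pgf_nonneg pgf_le_1)
  finally show ?thesis using assms by (simp add: pgf_nonneg integral_nonneg_AE)
qed

lemma pgf_conv_pow:
  assumes "0 \<le> z" "z \<le> 1"
  shows "pgf (conv_pow P n) z = pgf P z ^ n"
  by (induction n) (simp_all add: pgf_conv_pmf assms)

lemma pgf_random_sum:
  assumes "0 \<le> z" "z \<le> 1"
  shows "pgf (bind_pmf N (conv_pow P)) z = pgf N (pgf P z)"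
  using assms by (simp add: pgf_bind_pmf pgf_conv_pow) (simp add: pgf_def)

lemma continuous_on_pgf: "continuous_on {0..1} (pgf p)"
proof -
  have "uniform_limit {0..1} (\<lambda>n x. \<Sum>i<n. pmf p i * x ^ i) (\<lambda>x. \<Sum>i. pmf p i * x ^ i) sequentially"
    by (rule Weierstrass_m_test[where M="pmf p"])
       (auto intro!: sums_summable[OF pmf_nat_sums_1] mult_left_le power_le_one simp: abs_mult)
  hence "continuous_on {0..1} (\<lambda>x. \<Sum>i. pmf p i * x ^ i)"
    by (rule uniform_limit_theorem[rotated]) (auto intro!: always_eventually continuous_intros)
  thus ?thesis by (rule continuous_on_cong[THEN iffD1, rotated 2]) (auto simp: pgf_eq_suminf)
qed

lemma pgf_has_real_derivative:
  assumes "\<bar>z\<bar> < 1"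
  shows "(pgf p has_real_derivative (\<Sum>k. diffs (pmf p) k * z ^ k)) (at z)"
proof -
  have "((\<lambda>x. \<Sum>k. pmf p k * x ^ k) has_real_derivative (\<Sum>k. diffs (pmf p) k * z ^ k)) (at z)"
    by (rule termdiffs_strong[where K=1]) (use assms pmf_nat_sums_1 in \<open>auto intro: sums_summable\<close>)
  thus ?thesis
    by (rule has_field_derivative_transform_within_open[where S="{-1<..<1}"])
       (use assms in \<open>auto simp: pgf_eq_suminf\<close>)
qed

lemma index_weighted_pmf_sums:
  assumes "\<bar>z\<bar> < 1" and "(pgf p has_real_derivative D) (at z)"
  shows "(\<lambda>k. real k * pmf p k * z ^ k) sums (z * D)"
proof -
  have "summable (\<lambda>k. diffs (pmf p) k * z ^ k)"
    by (rule termdiff_converges[where K=1])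
       (use assms(1) in \<open>auto intro: sums_summable[OF pgf_sums]\<close>)
  moreover have "D = (\<Sum>k. diffs (pmf p) k * z ^ k)"
    using DERIV_unique[OF assms(2) pgf_has_real_derivative[OF assms(1)]] .
  ultimately have "(\<lambda>k. z * (diffs (pmf p) k * z ^ k)) sums (z * D)"
    by (intro sums_mult) (simp add: summable_sums)
  moreover have "(\<lambda>k. z * (diffs (pmf p) k * z ^ k)) = (\<lambda>k. real (Suc k) * pmf p (Suc k) * z ^ Suc k)"
    by (auto simp: diffs_def mult_ac)
  ultimately show ?thesis
    using sums_Suc_iff[of "\<lambda>k. real k * pmf p k * z ^ k"] by simp
qed

lemma real_powser_zero_imp_coeff_zero:
  fixes c :: "nat \<Rightarrow> real"
  assumes "\<And>z. 0 < z \<Longrightarrow> z < 1 \<Longrightarrow> (\<lambda>k. c k * z ^ k) sums 0"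
  shows "c n = 0"
proof (induction n rule: less_induct)
  case (less n)
  have shifted: "(\<lambda>k. c (k + n) * z ^ k) sums 0" if z: "0 < z" "z < 1" for z
  proof -
    have "(\<lambda>k. c (k + n) * z ^ (k + n)) sums 0"
      using sums_zero_iff_shift[of n "\<lambda>k. c k * z ^ k" 0] less assms[OF z] by auto
    from sums_mult2[OF this, of "inverse (z ^ n)"]
    have "(\<lambda>k. c (k + n) * z ^ (k + n) * inverse (z ^ n)) sums 0" by simp
    moreover have "\<And>k. c (k + n) * z ^ (k + n) * inverse (z ^ n) = c (k + n) * z ^ k"
      using z by (simp add: power_add)
    ultimately show ?thesis by simp
  qed
  define f where "f x = (\<Sum>k. c (k + n) * x ^ k)" for x :: real
  have "isCont f 0" unfolding f_def
    by (rule isCont_powser[where K="1/2"]) (use shifted[of "1/2"] in \<open>auto simp: sums_iff\<close>)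
  hence "(f \<longlongrightarrow> c n) (at_right 0)"
    by (simp add: isCont_def filterlim_at_split f_def)
  moreover have "eventually (\<lambda>x. f x = 0) (at_right (0::real))"
    unfolding eventually_at_right_field
    by (rule exI[of _ 1]) (auto simp: f_def shifted sums_unique[symmetric])
  hence "(f \<longlongrightarrow> 0) (at_right 0)" by (rule tendsto_eventually)
  ultimately show "c n = 0" using tendsto_unique[of "at_right (0::real)"] by auto
qed

lemma real_powser_coeff_unique:
  fixes a b :: "nat \<Rightarrow> real"
  assumes "\<And>z. 0 < z \<Longrightarrow> z < 1 \<Longrightarrow> (\<lambda>k. a k * z ^ k) sums F z"
    and "\<And>z. 0 < z \<Longrightarrow> z < 1 \<Longrightarrow> (\<lambda>k. b k * z ^ k) sums F z"
  shows "a n = b n"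
proof -
  have "(\<lambda>k. a k - b k) n = 0"
  proof (rule real_powser_zero_imp_coeff_zero)
    fix z :: real assume "0 < z" "z < 1"
    from sums_diff[OF assms(1)[OF this] assms(2)[OF this]]
    show "(\<lambda>k. (a k - b k) * z ^ k) sums 0" by (simp add: algebra_simps)
  qed
  thus ?thesis by simp
qed

lemma pmf_eqI_pgf:
  fixes p q :: "nat pmf"
  assumes "\<And>z. 0 < z \<Longrightarrow> z < 1 \<Longrightarrow> pgf p z = pgf q z"
  shows "p = q"
proof (rule pmf_eqI)
  fix n
  show "pmf p n = pmf q n"
  proof (rule real_powser_coeff_unique[where F="pgf q"])
    fix z :: real assume z: "0 < z" "z < 1"
    show "(\<lambda>k. pmf q k * z ^ k) sums pgf q z" using z by (intro pgf_sums) auto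
    show "(\<lambda>k. pmf p k * z ^ k) sums pgf q z" using z pgf_sums[of z p] assms[OF z] by auto
  qed
qed

lemma pmf_embed_pmf_nat:
  fixes a :: "nat \<Rightarrow> real"
  assumes "\<And>k. 0 \<le> a k" and "a sums 1"
  shows "pmf (embed_pmf a) k = a k"
proof (rule pmf_embed_pmf)
  have "(\<lambda>i. ennreal (a i)) sums ennreal 1" using assms by (subst sums_ennreal) auto
  thus "(\<integral>\<^sup>+x. ennreal (a x) \<partial>count_space UNIV) = 1"
    by (simp add: nn_integral_count_space_nat sums_iff)
qed (rule assms)

subsection \<open>Compound Poisson laws and size-biasing\<close>

lemma pgf_geometric_pmf:
  assumes "0 < p" "p \<le> 1" "0 \<le> z" "z \<le> 1"
  shows "pgf (geometric_pmf p) z = p / (1 - (1 - p) * z)"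
proof -
  have "(1 - p) * z \<le> 1 - p"
    using assms by (intro mult_left_le) auto
  hence "\<bar>(1 - p) * z\<bar> < 1"
    using assms by (simp add: abs_of_nonneg)
  hence "(\<lambda>n. p * ((1 - p) * z) ^ n) sums (p * (1 / (1 - (1 - p) * z)))"
    by (intro sums_mult geometric_sums) simp
  moreover have "(\<lambda>n. p * ((1 - p) * z) ^ n) = (\<lambda>n. pmf (geometric_pmf p) n * z ^ n)"
    using assms by (auto simp: power_mult_distrib)
  ultimately show ?thesis using pgf_sums[of z "geometric_pmf p"] assms sums_unique2 by force
qed

lemma pgf_poisson_pmf:
  assumes "0 < r" "0 \<le> z" "z \<le> 1"
  shows "pgf (poisson_pmf r) z = exp (r * (z - 1))"
proof -
  have "(\<lambda>n. (r * z) ^ n / fact n * exp (- r)) sums (exp (r * z) * exp (- r))"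
    using sums_mult2[OF exp_converges[of "r * z"], of "exp (- r)"] by (simp add: divide_inverse mult_ac)
  moreover have "(\<lambda>n. (r * z) ^ n / fact n * exp (- r)) = (\<lambda>n. pmf (poisson_pmf r) n * z ^ n)"
    using assms by (auto simp: power_mult_distrib)
  ultimately have "pgf (poisson_pmf r) z = exp (r * z) * exp (- r)"
    using pgf_sums[of z "poisson_pmf r"] assms sums_unique2 by force
  thus ?thesis by (simp add: right_diff_distrib exp_diff exp_minus divide_inverse)
qed

definition compound_poisson_pmf :: "real \<Rightarrow> nat pmf \<Rightarrow> nat pmf" where
  "compound_poisson_pmf r J = bind_pmf (poisson_pmf r) (conv_pow J)"

lemma pgf_compound_poisson_pmf:
  assumes "0 < r" "0 \<le> z" "z \<le> 1"
  shows "pgf (compound_poisson_pmf r J) z = exp (r * (pgf J z - 1))"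
  using assms unfolding compound_poisson_pmf_def
  by (simp add: pgf_random_sum pgf_poisson_pmf pgf_nonneg pgf_le_1)

lemma inf_divisible_compound_poisson_pmf:
  assumes "0 < r"
  shows "inf_divisible (compound_poisson_pmf r J)"
  unfolding inf_divisible_def
proof (intro allI impI)
  fix n :: nat assume "n \<ge> 1"
  have "conv_pow (compound_poisson_pmf (r / n) J) n = compound_poisson_pmf r J"
  proof (rule pmf_eqI_pgf)
    fix z :: real assume "0 < z" "z < 1"
    with assms \<open>n \<ge> 1\<close> show "pgf (conv_pow (compound_poisson_pmf (r / n) J) n) z =
        pgf (compound_poisson_pmf r J) z"
      by (simp add: pgf_conv_pow pgf_compound_poisson_pmf flip: exp_of_nat_mult)
  qed
  thus "\<exists>h. conv_pow h n = compound_poisson_pmf r J" by blast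
qed

lemma pgf_compound_poisson_has_derivative:
  assumes "0 < r" "0 \<le> z" "z < 1" and "(pgf J has_real_derivative D) (at z)"
  shows "(pgf (compound_poisson_pmf r J) has_real_derivative
           r * D * pgf (compound_poisson_pmf r J) z) (at z within {0..1})"
proof -
  have "((\<lambda>x. exp (r * (pgf J x - 1))) has_real_derivative
          r * D * pgf (compound_poisson_pmf r J) z) (at z within {0..1})"
    unfolding pgf_compound_poisson_pmf[OF assms(1-2) less_imp_le[OF assms(3)]]
    by (rule derivative_eq_intros has_field_derivative_at_within[OF assms(4)] refl | simp)+
  thus ?thesis
    by (rule has_field_derivative_transform_within[OF _ zero_less_one])
       (use assms in \<open>auto simp: pgf_compound_poisson_pmf mult_ac\<close>)
qed

lemma index_mult_pmf_eq_of_pgf_deriv: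
  assumes "\<And>z. 0 < z \<Longrightarrow> z < 1 \<Longrightarrow> (pgf g has_real_derivative c * pgf W z * pgf g z) (at z)"
  shows "real k * pmf g k = c * pmf (conv_pmf g (conv_pmf (return_pmf 1) W)) k"
proof (rule real_powser_coeff_unique)
  define R where "R = conv_pmf g (conv_pmf (return_pmf 1) W)"
  fix z :: real assume z: "0 < z" "z < 1"
  have "pgf R z = z * (pgf W z * pgf g z)"
    using z by (simp add: R_def pgf_conv_pmf)
  thus "(\<lambda>k. real k * pmf g k * z ^ k) sums (c * pgf R z)"
    using index_weighted_pmf_sums[OF _ assms[OF z]] z by (simp add: mult_ac)
  show "(\<lambda>k. c * pmf R k * z ^ k) sums (c * pgf R z)"
    using sums_mult[OF pgf_sums[of z R], of c] z by (simp add: mult_ac)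
qed

lemma size_biased_of_pgf_deriv:
  assumes "0 < c"
    and "\<And>z. 0 < z \<Longrightarrow> z < 1 \<Longrightarrow> (pgf g has_real_derivative c * pgf W z * pgf g z) (at z)"
  shows "integrable (measure_pmf g) real" "measure_pmf.expectation g real = c"
    and "size_biased g k = pmf (conv_pmf g (conv_pmf (return_pmf 1) W)) k"
proof -
  define R where "R = conv_pmf g (conv_pmf (return_pmf 1) W)"
  have index_mult: "real k * pmf g k = c * pmf R k" for k
    unfolding R_def by (rule index_mult_pmf_eq_of_pgf_deriv[OF assms(2)])
  have sums_c: "(\<lambda>k. pmf g k * real k) sums c"
    using sums_mult[OF pmf_nat_sums_1[of R], of c] index_mult by (simp add: mult.commute)
  then show int: "integrable (measure_pmf g) real"
    by (simp add: integrable_pmf_nat_iff sums_summable)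
  show mean: "measure_pmf.expectation g real = c"
    using expectation_pmf_nat_sums[OF int] sums_c by (rule sums_unique2)
  show "size_biased g k = pmf R k"
    unfolding size_biased_def mean index_mult using assms(1) by simp
qed

text \<open>The law \<open>J\<close> with \<open>J(k + 1) = W(k) / ((k + 1) E[1/(1+W)])\<close>: its size-biased version is
  \<open>1 + W\<close>, and \<open>pgf J\<close> is a primitive of \<open>pgf W\<close> up to the factor \<open>E[1/(1+W)]\<close>.\<close>

definition mean_inverse_succ :: "nat pmf \<Rightarrow> real" where
  "mean_inverse_succ W = (\<Sum>k. pmf W k / Suc k)"

definition size_unbiased_pmf :: "nat pmf \<Rightarrow> nat pmf" where
  "size_unbiased_pmf W =
     embed_pmf (\<lambda>k. if k = 0 then 0 else pmf W (k - 1) / k / mean_inverse_succ W)"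

lemma mean_inverse_succ_sums: "(\<lambda>k. pmf W k / Suc k) sums mean_inverse_succ W"
  unfolding mean_inverse_succ_def
  by (intro summable_sums summable_comparison_test'[OF sums_summable[OF pmf_nat_sums_1[of W]], where N=0])
     (auto simp: divide_le_eq mult_le_cancel_left1 leD)

lemma mean_inverse_succ_pos: "0 < mean_inverse_succ W"
proof -
  obtain i where "i \<in> set_pmf W" using set_pmf_not_empty[of W] by blast
  hence "0 < pmf W i / Suc i" by (simp add: pmf_positive)
  with sums_summable[OF mean_inverse_succ_sums[of W]] show ?thesis
    unfolding mean_inverse_succ_def by (intro suminf_pos2) auto
qed

lemma pmf_size_unbiased_pmf:
  "pmf (size_unbiased_pmf W) k = (if k = 0 then 0 else pmf W (k - 1) / k / mean_inverse_succ W)"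
  unfolding size_unbiased_pmf_def
proof (rule pmf_embed_pmf_nat)
  show "0 \<le> (if k = 0 then 0 else pmf W (k - 1) / k / mean_inverse_succ W)" for k
    using mean_inverse_succ_pos[of W] by simp
  define a where "a k = (if k = 0 then 0 else pmf W (k - 1) / k / mean_inverse_succ W)" for k
  have "(\<lambda>k. a (Suc k)) sums 1"
    using sums_divide[OF mean_inverse_succ_sums[of W], of "mean_inverse_succ W"]
          mean_inverse_succ_pos[of W] by (simp add: a_def)
  thus "a sums 1"
    by (subst (asm) sums_Suc_iff) (simp add: a_def)
qed

lemma pgf_size_unbiased_pmf_has_derivative:
  assumes "\<bar>z\<bar> < 1"
  shows "(pgf (size_unbiased_pmf W) has_real_derivative pgf W z / mean_inverse_succ W) (at z)"
proof -
  have "(\<lambda>k. diffs (pmf (size_unbiased_pmf W)) k * z ^ k) = (\<lambda>k. pmf W k * z ^ k / mean_inverse_succ W)"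
    by (auto simp: diffs_def pmf_size_unbiased_pmf)
  moreover have "(\<lambda>k. pmf W k * z ^ k / mean_inverse_succ W) sums (pgf W z / mean_inverse_succ W)"
    using assms by (intro sums_divide pgf_sums) auto
  ultimately show ?thesis
    using pgf_has_real_derivative[OF assms, of "size_unbiased_pmf W"] by (simp add: sums_iff)
qed

lemma pgf_compound_poisson_size_unbiased_has_derivative:
  fixes W :: "nat pmf"
  assumes "0 < c" "0 \<le> z" "z < 1"
  defines "g \<equiv> compound_poisson_pmf (c * mean_inverse_succ W) (size_unbiased_pmf W)"
  shows "(pgf g has_real_derivative c * pgf W z * pgf g z) (at z within {0..1})"
  using pgf_compound_poisson_has_derivative[OF _ assms(2,3) pgf_size_unbiased_pmf_has_derivative,
          of "c * mean_inverse_succ W" W] assms mean_inverse_succ_pos[of W]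
  by (simp add: g_def)

subsection \<open>Tail generating functions\<close>

abbreviation tail_prob :: "nat pmf \<Rightarrow> nat \<Rightarrow> real" where
  "tail_prob p k \<equiv> measure_pmf.prob p {k<..}"

lemma tail_prob_0: "tail_prob p 0 = 1 - pmf p 0"
proof -
  have "tail_prob p 0 = measure_pmf.prob p (space (measure_pmf p) - {0})"
    by (intro arg_cong[where f="measure_pmf.prob p"]) auto
  also have "\<dots> = 1 - pmf p 0"
    by (subst measure_pmf.prob_compl) (auto simp: measure_pmf_single)
  finally show ?thesis .
qed

lemma tail_prob_Suc: "tail_prob p k = tail_prob p (Suc k) + pmf p (Suc k)"
proof -
  have "tail_prob p k = measure_pmf.prob p ({Suc k<..} \<union> {Suc k})"
    by (intro arg_cong[where f="measure_pmf.prob p"]) auto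
  also have "\<dots> = tail_prob p (Suc k) + measure_pmf.prob p {Suc k}"
    by (rule measure_pmf.finite_measure_Union) auto
  finally show ?thesis by (simp add: measure_pmf_single)
qed

lemma tail_prob_sums_mean:
  assumes "integrable (measure_pmf p) real"
  shows "tail_prob p sums measure_pmf.expectation p real"
proof -
  have count: "(\<Sum>k. indicator {k<..} x :: ennreal) = ennreal (real x)" for x :: nat
  proof -
    have "(\<Sum>k. indicator {k<..} x :: ennreal) = (\<Sum>k<x. indicator {k<..} x)"
      by (rule suminf_finite) auto
    thus ?thesis by (simp add: ennreal_of_nat_eq_real_of_nat)
  qed
  have "ennreal (measure_pmf.expectation p real) = (\<integral>\<^sup>+x. (\<Sum>k. indicator {k<..} x) \<partial>p)"
    using assms by (simp add: nn_integral_eq_integral[symmetric] count)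
  also have "\<dots> = (\<Sum>k. ennreal (tail_prob p k))"
    by (simp add: nn_integral_suminf measure_pmf.emeasure_eq_measure)
  finally have "(\<lambda>k. ennreal (tail_prob p k)) sums ennreal (measure_pmf.expectation p real)"
    by (metis summable_sums summableI)
  thus ?thesis by (subst (asm) sums_ennreal) auto
qed

lemma one_minus_pmf_0_le_mean:
  assumes "integrable (measure_pmf p) real"
  shows "1 - pmf p 0 \<le> measure_pmf.expectation p real"
  using sum_le_suminf[OF sums_summable[OF tail_prob_sums_mean[OF assms]], of "{0}"]
        tail_prob_sums_mean[OF assms]
  by (simp add: tail_prob_0 sums_iff)

lemma tail_gf_sums:
  assumes "integrable (measure_pmf p) real" "0 \<le> z" "z \<le> 1"
  shows "(\<lambda>k. z ^ k * tail_prob p k) sums tail_gf p z"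
  unfolding tail_gf_def
  by (rule summable_sums, rule summable_comparison_test'[OF sums_summable[OF tail_prob_sums_mean[OF assms(1)]], where N=0])
     (use assms in \<open>auto intro!: mult_left_le_one_le power_le_one\<close>)

text \<open>This removes the removable singularity at \<open>z = 1\<close> of the integrand of the theorem.\<close>

lemma one_minus_pgf_eq_tail_gf:
  assumes "integrable (measure_pmf p) real" "0 \<le> z" "z \<le> 1"
  shows "1 - pgf p z = (1 - z) * tail_gf p z"
proof -
  have "(\<lambda>k. pmf p (Suc k) * z ^ Suc k) sums (pgf p z - pmf p 0)"
    using pgf_sums[of z p] assms by (subst sums_Suc_iff) auto
  moreover have "(\<lambda>k. z ^ Suc k * tail_prob p k - z ^ Suc k * tail_prob p (Suc k)) sums
        (z * tail_gf p z - (tail_gf p z - tail_prob p 0))"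
  proof (rule sums_diff)
    show "(\<lambda>k. z ^ Suc k * tail_prob p k) sums (z * tail_gf p z)"
      using sums_mult[OF tail_gf_sums[OF assms], of z] by (simp add: mult_ac)
    show "(\<lambda>k. z ^ Suc k * tail_prob p (Suc k)) sums (tail_gf p z - tail_prob p 0)"
      using tail_gf_sums[OF assms] by (subst sums_Suc_iff) auto
  qed
  moreover have "(\<lambda>k. z ^ Suc k * tail_prob p k - z ^ Suc k * tail_prob p (Suc k)) =
                 (\<lambda>k. pmf p (Suc k) * z ^ Suc k)"
    by (rule ext) (subst tail_prob_Suc, simp add: algebra_simps)
  ultimately have "pgf p z - pmf p 0 = z * tail_gf p z - (tail_gf p z - tail_prob p 0)"
    using sums_unique2 by metis
  thus ?thesis by (simp add: tail_prob_0 algebra_simps)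
qed

lemma continuous_on_tail_gf:
  assumes "integrable (measure_pmf p) real"
  shows "continuous_on {0..1} (tail_gf p)"
proof -
  have "uniform_limit {0..1} (\<lambda>n x. \<Sum>i<n. x ^ i * tail_prob p i) (tail_gf p) sequentially"
    unfolding tail_gf_def[abs_def]
    by (rule Weierstrass_m_test[where M="tail_prob p"])
       (auto intro!: sums_summable[OF tail_prob_sums_mean[OF assms]] mult_left_le_one_le power_le_one
             simp: abs_mult)
  thus ?thesis
    by (rule uniform_limit_theorem[rotated]) (auto intro!: always_eventually continuous_intros)
qed

lemma tail_gf_nonneg:
  assumes "integrable (measure_pmf p) real" "0 \<le> z" "z \<le> 1"
  shows "0 \<le> tail_gf p z"
  by (rule sums_le[OF _ sums_zero tail_gf_sums[OF assms]]) (use assms in auto)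

lemma tail_gf_le_mean:
  assumes "integrable (measure_pmf p) real" "0 \<le> z" "z \<le> 1"
  shows "tail_gf p z \<le> measure_pmf.expectation p real"
  by (rule sums_le[OF _ tail_gf_sums[OF assms] tail_prob_sums_mean[OF assms(1)]])
     (use assms in \<open>auto intro!: mult_left_le_one_le power_le_one\<close>)

lemma equilibrium_pmf_exists:
  assumes "integrable (measure_pmf p) real" "0 < measure_pmf.expectation p real"
  shows "\<exists>P. \<forall>z\<in>{0..1}. pgf P z = tail_gf p z / measure_pmf.expectation p real"
proof
  let ?M = "measure_pmf.expectation p real"
  define P where "P = embed_pmf (\<lambda>k. tail_prob p k / ?M)"
  have pmf_P: "pmf P k = tail_prob p k / ?M" for k
    unfolding P_def using assms sums_divide[OF tail_prob_sums_mean[OF assms(1)], of ?M]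
    by (intro pmf_embed_pmf_nat) auto
  show "\<forall>z\<in>{0..1}. pgf P z = tail_gf p z / ?M"
  proof
    fix z :: real assume "z \<in> {0..1}"
    hence "(\<lambda>k. pmf P k * z ^ k) sums (tail_gf p z / ?M)"
      using sums_divide[OF tail_gf_sums[OF assms(1)], of z ?M] by (simp add: pmf_P mult_ac)
    thus "pgf P z = tail_gf p z / ?M"
      using pgf_sums[of z P] \<open>z \<in> {0..1}\<close> sums_unique2 by force
  qed
qed

subsection \<open>Linear first-order equations\<close>

lemma has_real_derivative_exp_neg_integral:
  fixes f :: "real \<Rightarrow> real"
  assumes "continuous_on {a..b} f" "z \<in> {a..b}"
  shows "((\<lambda>x. exp (- integral {x..b} f)) has_real_derivative f z * exp (- integral {z..b} f))
           (at z within {a..b})"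
  by (rule derivative_eq_intros integral_has_real_derivative'[OF assms] refl | simp)+

lemma linear_ode_unique:
  fixes f h :: "real \<Rightarrow> real"
  assumes "continuous_on {a..b} f" "continuous_on {a..b} h" "h b = 1"
    and "\<And>z. a \<le> z \<Longrightarrow> z < b \<Longrightarrow> (h has_real_derivative f z * h z) (at z within {a..b})"
    and "z \<in> {a..b}"
  shows "h z = exp (- integral {z..b} f)"
proof -
  define E where "E x = exp (- integral {x..b} f)" for x
  have E_deriv: "(E has_real_derivative f x * E x) (at x within {a..b})" if "x \<in> {a..b}" for x
    unfolding E_def using has_real_derivative_exp_neg_integral[OF assms(1) that] .
  have E_cont: "continuous_on {a..b} E"
    using E_deriv by (rule DERIV_continuous_on)
  have "h x / E x = h a / E a" if "x \<in> {a..b}" for x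
  proof (rule has_derivative_zero_unique_strong_interval[of "{b}" a b, OF _ _ refl _ that])
    show "continuous_on {a..b} (\<lambda>x. h x / E x)"
      using assms(2) E_cont by (intro continuous_on_divide) (auto simp: E_def)
    fix x assume x: "x \<in> {a..b} - {b}"
    have "((\<lambda>x. h x / E x) has_real_derivative
           (f x * h x * E x - h x * (f x * E x)) / (E x * E x)) (at x within {a..b})"
      using x by (intro DERIV_divide assms(4) E_deriv) (auto simp: E_def)
    thus "((\<lambda>x. h x / E x) has_derivative (\<lambda>_. 0)) (at x within {a..b})"
      by (simp add: has_field_derivative_def algebra_simps mult_zero_left[abs_def])
  qed simp
  from this[of z] this[of b] assms(5) have "h z / E z = h b / E b" by simp
  with assms(3) show ?thesis by (simp add: E_def)
qed

subsection \<open>The stationary equation\<close>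

locale stationary_setting =
  fixes pX pY :: "nat pmf" and b1 b2 m0 :: real
  assumes square_integrable_X: "integrable (measure_pmf pX) (\<lambda>k. real k ^ 2)"
    and square_integrable_Y: "integrable (measure_pmf pY) (\<lambda>k. real k ^ 2)"
    and b1_pos: "b1 > 0" and b2_pos: "b2 > 0" and m0_pos: "m0 > 0"
    and balance: "b1 * (measure_pmf.expectation pX real - 1) + b2 * measure_pmf.expectation pY real = 0"
    and pmf_Y_0: "pmf pY 0 < 1"
begin

abbreviation "mX \<equiv> measure_pmf.expectation pX real"
abbreviation "mY \<equiv> measure_pmf.expectation pY real"

abbreviation G :: "real \<Rightarrow> real" where
  "G \<equiv> \<lambda>z. exp (- m0 * (b2 / b1) * integral {z..1} (\<lambda>s. (1 - pgf pY s) / (pgf pX s - s)))"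

text \<open>The pgf of \<open>\<zeta> + \<xi>\<^sub>1 + \<dots> + \<xi>\<^sub>\<gamma>\<close>; the stationary equation reads \<open>G' = m\<^sub>0 w G\<close>.\<close>

abbreviation w :: "real \<Rightarrow> real" where
  "w z \<equiv> b2 / b1 * tail_gf pY z / (1 - tail_gf pX z)"

lemma integrable_X: "integrable (measure_pmf pX) real"
  by (rule measure_pmf.square_integrable_imp_integrable) (use square_integrable_X in auto)

lemma integrable_Y: "integrable (measure_pmf pY) real"
  by (rule measure_pmf.square_integrable_imp_integrable) (use square_integrable_Y in auto)

lemma mean_X_nonneg: "0 \<le> mX"
  by (rule integral_nonneg_AE) auto

lemma mean_Y_pos: "0 < mY"
  using one_minus_pmf_0_le_mean[OF integrable_Y] pmf_Y_0 by linarith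

lemma mean_X_less_1: "mX < 1"
proof -
  have "b1 * (mX - 1) < 0"
    using balance b2_pos mean_Y_pos by (smt (verit) mult_pos_pos)
  thus ?thesis using b1_pos by (simp add: mult_less_0_iff)
qed

lemma tail_gf_X_less_1: "0 \<le> z \<Longrightarrow> z \<le> 1 \<Longrightarrow> tail_gf pX z < 1"
  using tail_gf_le_mean[OF integrable_X] mean_X_less_1 by fastforce

lemma continuous_on_w: "continuous_on {0..1} w"
  using tail_gf_X_less_1
  by (intro continuous_intros continuous_on_tail_gf integrable_X integrable_Y) force

lemma pgf_X_minus_id: "0 \<le> z \<Longrightarrow> z \<le> 1 \<Longrightarrow> pgf pX z - z = (1 - z) * (1 - tail_gf pX z)"
  using one_minus_pgf_eq_tail_gf[OF integrable_X] by (simp add: algebra_simps)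

lemma pgf_Y_minus_1: "0 \<le> z \<Longrightarrow> z \<le> 1 \<Longrightarrow> pgf pY z - 1 = - ((1 - z) * tail_gf pY z)"
  using one_minus_pgf_eq_tail_gf[OF integrable_Y] by (simp add: algebra_simps)

lemma stationary_equation_iff:
  assumes "0 \<le> z" "z < 1"
  shows "m0 * b2 * (pgf pY z - 1) * h + b1 * (pgf pX z - z) * h' = 0 \<longleftrightarrow> h' = m0 * w z * h"
proof -
  have "1 - tail_gf pX z \<noteq> 0" "b1 \<noteq> 0"
    using tail_gf_X_less_1[of z] b1_pos assms by auto
  hence "m0 * b2 * (pgf pY z - 1) * h + b1 * (pgf pX z - z) * h' =
         (1 - z) * (b1 * (1 - tail_gf pX z)) * (h' - m0 * w z * h)"
    unfolding pgf_X_minus_id[OF assms(1) less_imp_le[OF assms(2)]]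
              pgf_Y_minus_1[OF assms(1) less_imp_le[OF assms(2)]]
    by (simp add: field_simps)
  moreover have "(1 - z) * (b1 * (1 - tail_gf pX z)) \<noteq> 0"
    using tail_gf_X_less_1[of z] b1_pos assms by simp
  ultimately show ?thesis by (metis mult_eq_0_iff eq_iff_diff_eq_0)
qed

lemma G_eq_exp_integral_w:
  assumes "z \<in> {0..1}"
  shows "G z = exp (- integral {z..1} (\<lambda>s. m0 * w s))"
proof -
  have "m0 * (b2 / b1) * ((1 - pgf pY s) / (pgf pX s - s)) = m0 * w s" if "0 \<le> s" "s < 1" for s
  proof -
    have "1 - pgf pY s = (1 - s) * tail_gf pY s" "pgf pX s - s = (1 - s) * (1 - tail_gf pX s)"
      using pgf_X_minus_id[of s] pgf_Y_minus_1[of s] that by auto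
    moreover have "1 - s \<noteq> 0" "1 - tail_gf pX s \<noteq> 0"
      using tail_gf_X_less_1[of s] that by auto
    ultimately show ?thesis by simp
  qed
  hence "integral {z..1} (\<lambda>s. m0 * w s) =
         integral {z..1} (\<lambda>s. m0 * (b2 / b1) * ((1 - pgf pY s) / (pgf pX s - s)))"
    using assms by (intro integral_spike[where S="{1}"]) auto
  also have "\<dots> = m0 * (b2 / b1) * integral {z..1} (\<lambda>s. (1 - pgf pY s) / (pgf pX s - s))"
    by (rule integral_mult_right)
  finally show ?thesis by simp
qed

lemma stationary_solution_G: "C1_stationary_solution pX pY b1 b2 m0 G"
  unfolding C1_stationary_solution_def
proof (intro exI[of _ "\<lambda>z. m0 * w z * G z"] conjI ballI)
  have G_deriv: "(G has_real_derivative m0 * w z * G z) (at z within {0..1})" if "z \<in> {0..1}" for z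
    using has_real_derivative_exp_neg_integral[OF continuous_on_mult_left[OF continuous_on_w, of m0] that]
    unfolding G_eq_exp_integral_w[OF that, symmetric]
    by (rule has_field_derivative_transform_within[OF _ zero_less_one that])
       (subst G_eq_exp_integral_w, auto)
  then show "(G has_real_derivative m0 * w z * G z) (at z within {0..1})" if "z \<in> {0..1}" for z
    using that .
  show "continuous_on {0..1} (\<lambda>z. m0 * w z * G z)"
    by (rule continuous_on_mult[OF continuous_on_mult_left[OF continuous_on_w] DERIV_continuous_on[OF G_deriv]])
  show "G 1 = 1" by simp
  show "m0 * b2 * (pgf pY z - 1) * G z + b1 * (pgf pX z - z) * (m0 * w z * G z) = 0"
    if "z \<in> {0..1}" for z
    using that stationary_equation_iff[of z "G z" "m0 * w z * G z"] by (cases "z = 1") auto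
qed

lemma stationary_solution_unique:
  assumes "C1_stationary_solution pX pY b1 b2 m0 h" "z \<in> {0..1}"
  shows "h z = G z"
proof -
  obtain h' where h_deriv: "\<And>z. z \<in> {0..1} \<Longrightarrow> (h has_real_derivative h' z) (at z within {0..1})"
    and "h 1 = 1"
    and h_eq: "\<And>z. z \<in> {0..1} \<Longrightarrow> m0 * b2 * (pgf pY z - 1) * h z + b1 * (pgf pX z - z) * h' z = 0"
    using assms(1) unfolding C1_stationary_solution_def by blast
  have "h z = exp (- integral {z..1} (\<lambda>s. m0 * w s))"
  proof (rule linear_ode_unique[OF _ DERIV_continuous_on[OF h_deriv] \<open>h 1 = 1\<close> _ assms(2)])
    show "continuous_on {0..1} (\<lambda>s. m0 * w s)"
      by (rule continuous_on_mult_left[OF continuous_on_w])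
    fix x :: real assume "0 \<le> x" "x < 1"
    thus "(h has_real_derivative m0 * w x * h x) (at x within {0..1})"
      using h_deriv[of x] h_eq[of x] stationary_equation_iff[of x] by auto
  qed
  thus ?thesis using G_eq_exp_integral_w[OF assms(2)] by simp
qed

lemma equilibrium_X_exists:
  "0 < mX \<Longrightarrow> \<exists>P. \<forall>z\<in>{0..1}. pgf P z = tail_gf pX z / mX"
  by (rule equilibrium_pmf_exists[OF integrable_X])

lemma equilibrium_Y_exists:
  "\<exists>Q. \<forall>z\<in>{0..1}. pgf Q z = b2 / b1 * inverse (1 - mX) * tail_gf pY z"
proof -
  have "b2 / b1 * inverse (1 - mX) = inverse mY"
    using balance b1_pos mean_X_less_1 mean_Y_pos by (simp add: field_simps)
  thus ?thesis
    using equilibrium_pmf_exists[OF integrable_Y mean_Y_pos] by (simp add: field_simps)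
qed

lemma pgf_geometric_random_sum:
  assumes P: "0 < mX \<longrightarrow> (\<forall>z\<in>{0..1}. pgf P z = tail_gf pX z / mX)"
    and Q: "\<forall>z\<in>{0..1}. pgf Q z = b2 / b1 * inverse (1 - mX) * tail_gf pY z"
    and \<Gamma>: "\<forall>z\<in>{0..1}. pgf \<Gamma> z = (1 - mX) / (1 - mX * z)"
    and z: "z \<in> {0..1}"
  shows "pgf (conv_pmf Q (bind_pmf \<Gamma> (conv_pow P))) z = w z"
proof -
  have "mX * pgf P z = tail_gf pX z"
  proof (cases "0 < mX")
    case False
    thus ?thesis
      using mean_X_nonneg tail_gf_nonneg[OF integrable_X] tail_gf_le_mean[OF integrable_X] z
      by (fastforce intro: antisym)
  qed (use P z in auto)
  moreover have "pgf P z \<in> {0..1}" using z by (auto intro: pgf_nonneg pgf_le_1)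
  ultimately have "pgf (bind_pmf \<Gamma> (conv_pow P)) z = (1 - mX) / (1 - tail_gf pX z)"
    using \<Gamma> z by (simp add: pgf_random_sum)
  moreover have "pgf Q z = b2 / b1 * inverse (1 - mX) * tail_gf pY z"
    using Q z by blast
  moreover have "1 - mX \<noteq> 0" "1 - tail_gf pX z \<noteq> 0"
    using z mean_X_less_1 tail_gf_X_less_1[of z] by auto
  ultimately show ?thesis
    using z by (simp add: pgf_conv_pmf)
qed

lemma random_sum_laws_exist:
  "\<exists>P Q \<Gamma>. (0 < mX \<longrightarrow> (\<forall>z\<in>{0..1}. pgf P z = tail_gf pX z / mX))
         \<and> (\<forall>z\<in>{0..1}. pgf Q z = b2 / b1 * inverse (1 - mX) * tail_gf pY z)
         \<and> (\<forall>z\<in>{0..1}. pgf \<Gamma> z = (1 - mX) / (1 - mX * z))"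
proof -
  obtain P where "0 < mX \<longrightarrow> (\<forall>z\<in>{0..1}. pgf P z = tail_gf pX z / mX)"
    using equilibrium_X_exists by (cases "0 < mX") auto
  moreover obtain Q where "\<forall>z\<in>{0..1}. pgf Q z = b2 / b1 * inverse (1 - mX) * tail_gf pY z"
    using equilibrium_Y_exists by blast
  moreover have "\<forall>z\<in>{0..1}. pgf (geometric_pmf (1 - mX)) z = (1 - mX) / (1 - mX * z)"
    using mean_X_nonneg mean_X_less_1 by (simp add: pgf_geometric_pmf)
  ultimately show ?thesis by blast
qed

lemma stationary_law_exists:
  "\<exists>g. (\<forall>z\<in>{0..1}. pgf g z = G z) \<and> inf_divisible g
       \<and> integrable (measure_pmf g) real
       \<and> (\<forall>P Q \<Gamma>.
            (0 < mX \<longrightarrow> (\<forall>z\<in>{0..1}. pgf P z = tail_gf pX z / mX)) \<longrightarrow>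
            (\<forall>z\<in>{0..1}. pgf Q z = b2 / b1 * inverse (1 - mX) * tail_gf pY z) \<longrightarrow>
            (\<forall>z\<in>{0..1}. pgf \<Gamma> z = (1 - mX) / (1 - mX * z)) \<longrightarrow>
            (\<forall>k. size_biased g k =
               pmf (conv_pmf g (conv_pmf (return_pmf 1) (conv_pmf Q (bind_pmf \<Gamma> (conv_pow P))))) k))"
proof -
  obtain P0 Q0 \<Gamma>0 where P0:
        "0 < mX \<longrightarrow> (\<forall>z\<in>{0..1}. pgf P0 z = tail_gf pX z / mX)"
    and Q0: "\<forall>z\<in>{0..1}. pgf Q0 z = b2 / b1 * inverse (1 - mX) * tail_gf pY z"
    and \<Gamma>0: "\<forall>z\<in>{0..1}. pgf \<Gamma>0 z = (1 - mX) / (1 - mX * z)"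
    using random_sum_laws_exist by blast
  define W0 where "W0 = conv_pmf Q0 (bind_pmf \<Gamma>0 (conv_pow P0))"
  have pgf_W0: "z \<in> {0..1} \<Longrightarrow> pgf W0 z = w z" for z
    unfolding W0_def by (rule pgf_geometric_random_sum[OF P0 Q0 \<Gamma>0])
  define g where "g = compound_poisson_pmf (m0 * mean_inverse_succ W0) (size_unbiased_pmf W0)"
  have g_deriv: "(pgf g has_real_derivative m0 * w z * pgf g z) (at z within {0..1})"
    if "0 \<le> z" "z < 1" for z
    using pgf_compound_poisson_size_unbiased_has_derivative[OF m0_pos that, of W0] that
    by (simp add: g_def pgf_W0)
  have g_deriv_open: "(pgf g has_real_derivative m0 * pgf W z * pgf g z) (at z)"
    if "\<forall>z\<in>{0..1}. pgf W z = w z" "0 < z" "z < 1" for W z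
    using g_deriv[of z] that at_within_Icc_at[of 0 z 1] by simp
  have "pgf g z = G z" if "z \<in> {0..1}" for z
    using linear_ode_unique[OF continuous_on_mult_left[OF continuous_on_w] continuous_on_pgf
            pgf_at_1 g_deriv that] G_eq_exp_integral_w[OF that]
    by simp
  moreover have "inf_divisible g"
    unfolding g_def using m0_pos mean_inverse_succ_pos
    by (intro inf_divisible_compound_poisson_pmf) simp
  moreover have "integrable (measure_pmf g) real"
    using g_deriv_open[of W0] pgf_W0 by (intro size_biased_of_pgf_deriv(1)[OF m0_pos, where W=W0]) auto
  moreover have "size_biased g k =
      pmf (conv_pmf g (conv_pmf (return_pmf 1) (conv_pmf Q (bind_pmf \<Gamma> (conv_pow P))))) k"
    if "0 < mX \<longrightarrow> (\<forall>z\<in>{0..1}. pgf P z = tail_gf pX z / mX)"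
      "\<forall>z\<in>{0..1}. pgf Q z = b2 / b1 * inverse (1 - mX) * tail_gf pY z"
      "\<forall>z\<in>{0..1}. pgf \<Gamma> z = (1 - mX) / (1 - mX * z)" for P Q \<Gamma> k
    using g_deriv_open[of "conv_pmf Q (bind_pmf \<Gamma> (conv_pow P))"] pgf_geometric_random_sum[OF that]
    by (intro size_biased_of_pgf_deriv(3)[OF m0_pos]) auto
  ultimately show ?thesis by blast
qed

end

theorem proposition5p2:
  fixes pX pY :: "nat pmf" and b1 b2 m0 :: real
  assumes "integrable (measure_pmf pX) (\<lambda>k. real k ^ 2)"
    and "integrable (measure_pmf pY) (\<lambda>k. real k ^ 2)"
    and "b1 > 0" and "b2 > 0" and "m0 > 0"
    and "b1 * (measure_pmf.expectation pX real - 1) + b2 * measure_pmf.expectation pY real = 0"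
    and "pmf pY 0 < 1"
  defines "G \<equiv> (\<lambda>z. exp (- m0 * (b2 / b1) *
                 integral {z..1} (\<lambda>s. (1 - pgf pY s) / (pgf pX s - s))))"
    and "m \<equiv> measure_pmf.expectation pX real"
  shows "C1_stationary_solution pX pY b1 b2 m0 G
    \<and> (\<forall>h. C1_stationary_solution pX pY b1 b2 m0 h \<longrightarrow> (\<forall>z\<in>{0..1}. h z = G z))
    \<and> (m > 0 \<longrightarrow> (\<exists>P. \<forall>z\<in>{0..1}. pgf P z = tail_gf pX z / m))
    \<and> (\<exists>Q. \<forall>z\<in>{0..1}. pgf Q z = b2 / b1 * inverse (1 - m) * tail_gf pY z)
    \<and> (\<exists>g. (\<forall>z\<in>{0..1}. pgf g z = G z) \<and> inf_divisible g
         \<and> integrable (measure_pmf g) real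
         \<and> (\<forall>P Q \<Gamma>.
              (m > 0 \<longrightarrow> (\<forall>z\<in>{0..1}. pgf P z = tail_gf pX z / m)) \<longrightarrow>
              (\<forall>z\<in>{0..1}. pgf Q z = b2 / b1 * inverse (1 - m) * tail_gf pY z) \<longrightarrow>
              (\<forall>z\<in>{0..1}. pgf \<Gamma> z = (1 - m) / (1 - m * z)) \<longrightarrow>
              (\<forall>k. size_biased g k =
                 pmf (conv_pmf g (conv_pmf (return_pmf 1)
                        (conv_pmf Q (bind_pmf \<Gamma> (\<lambda>n. conv_pow P n))))) k)))"
proof -
  interpret stationary_setting pX pY b1 b2 m0
    using assms(1-7) by unfold_locales
  show ?thesis
    unfolding G_def m_def
    using stationary_solution_G stationary_solution_unique equilibrium_X_exists
          equilibrium_Y_exists stationary_law_exists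
    by blast
qed

end
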